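(* Let $\mathcal{F}=\langle\mathbb{A},(\mu_i)_{i\in\mathsf{Ag}}\rangle$ be an APE-structure and $\mathbb{E}=(E,(\sim_i),(P_i),\Phi,\mathsf{pre})$ a probabilistic event structure over $\mathbb{A}$. Then the maps $(\mu^{\mathbb{E}}_i)_{i\in\mathsf{Ag}}$ of the updated structure $\mathcal{F}^{\mathbb{E}}=(\mathbb{A}^{\mathbb{E}},(\mu^{\mathbb{E}}_i)_{i\in\mathsf{Ag}})$ are well-defined.
   Context: Fix a set $\mathsf{Ag}$ of agents. A monadic Heyting algebra is a Heyting algebra $\mathbb{L}$ with, for each $i\in\mathsf{Ag}$, monotone unary operations $\lozenge_i,\Box_i$ such that for all $a,b$: $a\leq\lozenge_i a$; $\Box_i a\leq a$; $\lozenge_i(a\vee b)\leq\lozenge_i a\vee\lozenge_i b$; $\Box_i(a\to b)\leq\Box_i a\to\Box_i b$; $\lozenge_i a\leq\Box_i\lozenge_i a$; $\lozenge_i\Box_i a\leq\Box_i a$; $\Box_i(a\to b)\leq\lozenge_i a\to\lozenge_i b$; $\lozenge_i\bot\leq\bot$; $\top\leq\Box_i\top$. An epistemic Heyting algebra is a finite monadic Heyting algebra with $\lozenge_i a\vee\neg\lozenge_i a=\top$ for all $i,a$. An element $c$ is $i$-minimal if $c\neq\bot$, $\lozenge_i c=c$, and whenever $d<c$ and $\lozenge_i d=d$ then $d=\bot$; $\mathsf{Min}_i(\cdot)$ is the set of $i$-minimal elements. A partial map $\mu:\mathbb{A}\to\mathbb{R}^+$ is an $i$-premeasure if: $\mathsf{dom}(\mu)=\mathsf{Min}_i(\mathbb{A}){\downarrow}$;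 $\mu$ is order-preserving; for $a\in\mathsf{Min}_i(\mathbb{A})$ and $b,c\leq a$, $\mu(b\vee c)=\mu(b)+\mu(c)-\mu(b\wedge c)$; $\mu(\bot)=0$ if $\mathsf{dom}(\mu)\neq\varnothing$. It is an $i$-measure if also: for $a\in\mathsf{Min}_i(\mathbb{A})$ and $b<c\leq a$, $\mu(b)<\mu(c)$; and $\mu(a)=1$ for $a\in\mathsf{Min}_i(\mathbb{A})$. An APE-structure is $\langle\mathbb{A},(\mu_i)\rangle$ with $\mathbb{A}$ an epistemic Heyting algebra and each $\mu_i$ an $i$-measure. A pre-ordered multiset on $X$ is a multiset in which the copies $x_1,\dots,x_n$ of an element carry the linear order $x_1\prec\cdots\prec x_n$. A probabilistic event structure over $\mathbb{A}$ is $(E,(\sim_i),(P_i),\Phi,\mathsf{pre})$: $E$ non-empty finite; $\sim_i$ equivalence relations on $E$; $P_i:E\to\,]0,1]$ with $\sum\{P_i(e')\mid e'\sim_i e\}=1$; $\Phi$ a finite pre-ordered multiset on $\mathbb{A}$ such that any $a,b\in\Phi$ arising from distinct elements satisfy $a\wedge b=\bot$ or $a<b$ or $b<a$; $\mathsf{pre}(\bullet\mid a)$ a probability distribution on $E$ for each $a\in\Phi$; and if $\mathsf{pre}(e\mid a)=0$ then $\mathsf{pre}(e\mid b)=0$ for $b\in\Phi$ with $a<b$ (distinct elements) or $a\prec b$ (copies). For $a\in\Phi$: $\mathrm{mb}(a)$ is the set of maximal elements of $\Phi\cap({\downarrow}a\setminus\{a\})$, and $\mu^a_i(x):=\mu_i(x\wedge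 a)-\sum_{b\in\mathrm{mb}(a)}\mu_i(x\wedge b)$ for $x\in\mathsf{Min}_i(\mathbb{A}){\downarrow}$. Intermediate algebra $\mathbb{A}'=\prod_{\mathbb{E}}\mathbb{A}$: all maps $f:E\to\mathbb{A}$ with pointwise Heyting operations, $(\lozenge'_i f)(e)=\bigvee\{\lozenge_i f(e')\mid e'\sim_i e\}$, $(\Box'_i f)(e)=\bigwedge\{\Box_i f(e')\mid e'\sim_i e\}$; and $\mu'_i:\mathsf{Min}_i(\mathbb{A}'){\downarrow}\to\mathbb{R}^+$, $\mu'_i(f)=\sum_{e\in E}\sum_{a\in\Phi}P_i(e)\mu^a_i(f(e))\mathsf{pre}(e\mid a)$. Define $\overline{\mathsf{pre}}\in\mathbb{A}'$ by $\overline{\mathsf{pre}}(e)=\bigvee\{a\in\Phi\mid\mathsf{pre}(e\mid a)\neq0\}$. For an epistemic Heyting algebra $\mathbb{B}$ and $c\in\mathbb{B}$, the pseudo-quotient $\mathbb{B}^c$ has carrier the quotient Heyting algebra by $x\cong_c y\iff x\wedge c=y\wedge c$ (classes $[x]$), with $\lozenge^c_i[x]=[\lozenge_i(x\wedge c)]$, $\Box^c_i[x]=[\Box_i(c\to x)]$. Set $\mathbb{A}^{\mathbb{E}}:=(\mathbb{A}')^{\overline{\mathsf{pre}}}$. The updated structure is $\mathcal{F}^{\mathbb{E}}=(\mathbb{A}^{\mathbb{E}},(\mu^{\mathbb{E}}_i))$ where $\mu^{\mathbb{E}}_i:\mathsf{Min}_i(\mathbb{A}^{\mathbb{E}}){\downarrow}\to[0,1]$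 is given by $\mu^{\mathbb{E}}_i([g])=0$ if $[g]=\bot$ and otherwise $\mu^{\mathbb{E}}_i([g])=\mu'_i(g)/\mu'_i(f)$, where $[f]$ is the only element of $\mathsf{Min}_i(\mathbb{A}^{\mathbb{E}})$ with $[g]\leq[f]$. Well-definedness means: this $[f]$ is unique, the denominator is nonzero, and the value does not depend on the chosen representatives. *)

theory Defs
  imports Complex_Main "HOL-Library.Multiset"
begin

text \<open>The algebra A is the whole (finite) type 'a; its lattice structure is
the type-class lattice; its Heyting implication is a parameter imp
characterised by the Heyting adjunction.\<close>

definition heyting_imp :: "('a::complete_lattice \<Rightarrow> 'a \<Rightarrow> 'a) \<Rightarrow> bool" where
  "heyting_imp imp \<longleftrightarrow> (\<forall>x a b. x \<le> imp a b \<longleftrightarrow> inf x a \<le> b)"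

definition monadic_heyting ::
  "'i set \<Rightarrow> ('a::complete_lattice \<Rightarrow> 'a \<Rightarrow> 'a) \<Rightarrow> ('i \<Rightarrow> 'a \<Rightarrow> 'a) \<Rightarrow> ('i \<Rightarrow> 'a \<Rightarrow> 'a) \<Rightarrow> bool" where
  "monadic_heyting Ag imp dia box \<longleftrightarrow> heyting_imp imp \<and>
     (\<forall>i\<in>Ag. mono (dia i) \<and> mono (box i) \<and>
        (\<forall>a b. a \<le> dia i a \<and> box i a \<le> a \<and>
               dia i (sup a b) \<le> sup (dia i a) (dia i b) \<and>
               box i (imp a b) \<le> imp (box i a) (box i b) \<and>
               dia i a \<le> box i (dia i a) \<and>
               dia i (box i a) \<le> box i a \<and>
               box i (imp a b) \<le> imp (dia i a) (dia i b)) \<and>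
        dia i bot \<le> bot \<and> top \<le> box i top)"

definition epistemic_heyting ::
  "'i set \<Rightarrow> ('a::{finite,complete_lattice} \<Rightarrow> 'a \<Rightarrow> 'a) \<Rightarrow> ('i \<Rightarrow> 'a \<Rightarrow> 'a) \<Rightarrow> ('i \<Rightarrow> 'a \<Rightarrow> 'a) \<Rightarrow> bool" where
  "epistemic_heyting Ag imp dia box \<longleftrightarrow> monadic_heyting Ag imp dia box \<and>
     (\<forall>i\<in>Ag. \<forall>a. sup (dia i a) (imp (dia i a) bot) = top)"

definition minimal_elts :: "'b set \<Rightarrow> ('b \<Rightarrow> 'b \<Rightarrow> bool) \<Rightarrow> 'b \<Rightarrow> ('b \<Rightarrow> 'b) \<Rightarrow> 'b set" where
  "minimal_elts S le bt D =
     {c \<in> S. c \<noteq> bt \<and> D c = c \<and> (\<forall>d\<in>S. le d c \<and> d \<noteq> c \<and> D d = d \<longrightarrow> d = bt)}"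

definition MinA :: "('a::complete_lattice \<Rightarrow> 'a) \<Rightarrow> 'a set" where
  "MinA D = minimal_elts UNIV (\<le>) bot D"

definition MinA_down :: "('a::complete_lattice \<Rightarrow> 'a) \<Rightarrow> 'a set" where
  "MinA_down D = {x. \<exists>c\<in>MinA D. x \<le> c}"

text \<open>A partial map with domain MinA_down D is represented by a total map m
whose values outside the domain are irrelevant.\<close>
definition i_premeasure :: "('a::complete_lattice \<Rightarrow> 'a) \<Rightarrow> ('a \<Rightarrow> real) \<Rightarrow> bool" where
  "i_premeasure D m \<longleftrightarrow>
     (\<forall>x\<in>MinA_down D. 0 \<le> m x) \<and>
     (\<forall>x\<in>MinA_down D. \<forall>y\<in>MinA_down D. x \<le> y \<longrightarrow> m x \<le> m y) \<and>
     (\<forall>a\<in>MinA D. \<forall>b c. b \<le> a \<and> c \<le> a \<longrightarrow> m (sup b c) = m b + m c - m (inf b c)) \<and>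
     (MinA_down D \<noteq> {} \<longrightarrow> m bot = 0)"

definition i_measure :: "('a::complete_lattice \<Rightarrow> 'a) \<Rightarrow> ('a \<Rightarrow> real) \<Rightarrow> bool" where
  "i_measure D m \<longleftrightarrow> i_premeasure D m \<and>
     (\<forall>a\<in>MinA D. \<forall>b c. b < c \<and> c \<le> a \<longrightarrow> m b < m c) \<and>
     (\<forall>a\<in>MinA D. m a = 1)"

definition APE_structure ::
  "'i set \<Rightarrow> ('a::{finite,complete_lattice} \<Rightarrow> 'a \<Rightarrow> 'a) \<Rightarrow> ('i \<Rightarrow> 'a \<Rightarrow> 'a) \<Rightarrow> ('i \<Rightarrow> 'a \<Rightarrow> 'a)
     \<Rightarrow> ('i \<Rightarrow> 'a \<Rightarrow> real) \<Rightarrow> bool" where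
  "APE_structure Ag imp dia box mu \<longleftrightarrow> epistemic_heyting Ag imp dia box \<and>
     (\<forall>i\<in>Ag. i_measure (dia i) (mu i))"

text \<open>The copies x_1,...,x_n of an element x of the multiset Phi are the pairs (x,k), 1 \<le> k \<le> n.\<close>
definition copies :: "'a multiset \<Rightarrow> ('a \<times> nat) set" where
  "copies Phi = {(x, k). 1 \<le> k \<and> k \<le> count Phi x}"

definition copy_less :: "('a::order \<times> nat) \<Rightarrow> ('a \<times> nat) \<Rightarrow> bool" where
  "copy_less p q \<longleftrightarrow> fst p < fst q \<or> (fst p = fst q \<and> snd p < snd q)"

definition prob_event_structure ::
  "'i set \<Rightarrow> 'e set \<Rightarrow> ('i \<Rightarrow> ('e \<times> 'e) set) \<Rightarrow> ('i \<Rightarrow> 'e \<Rightarrow> real) \<Rightarrow> 'a::complete_lattice multiset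
     \<Rightarrow> ('e \<Rightarrow> 'a \<times> nat \<Rightarrow> real) \<Rightarrow> bool" where
  "prob_event_structure Ag E sim P Phi pre \<longleftrightarrow>
     finite E \<and> E \<noteq> {} \<and>
     (\<forall>i\<in>Ag. equiv E (sim i)) \<and>
     (\<forall>i\<in>Ag. \<forall>e\<in>E. 0 < P i e \<and> P i e \<le> 1 \<and> (\<Sum>e'\<in>{e'\<in>E. (e', e) \<in> sim i}. P i e') = 1) \<and>
     (\<forall>a\<in>#Phi. \<forall>b\<in>#Phi. a \<noteq> b \<longrightarrow> inf a b = bot \<or> a < b \<or> b < a) \<and>
     (\<forall>p\<in>copies Phi. (\<forall>e\<in>E. 0 \<le> pre e p) \<and> (\<Sum>e\<in>E. pre e p) = 1) \<and>
     (\<forall>p\<in>copies Phi. \<forall>q\<in>copies Phi. \<forall>e\<in>E. copy_less p q \<and> pre e p = 0 \<longrightarrow> pre e q = 0)"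

definition mb :: "'a::order multiset \<Rightarrow> 'a \<times> nat \<Rightarrow> ('a \<times> nat) set" where
  "mb Phi p = {q \<in> copies Phi. copy_less q p \<and> \<not> (\<exists>r\<in>copies Phi. copy_less r p \<and> copy_less q r)}"

definition mu_a :: "('a::complete_lattice \<Rightarrow> real) \<Rightarrow> 'a multiset \<Rightarrow> 'a \<times> nat \<Rightarrow> 'a \<Rightarrow> real" where
  "mu_a m Phi p x = m (inf x (fst p)) - (\<Sum>q\<in>mb Phi p. m (inf x (fst q)))"

text \<open>Maps E \<rightarrow> A, represented as functions that are bot outside E; order and
lattice operations are pointwise (HOL's function lattice).\<close>
definition AE :: "'e set \<Rightarrow> ('e \<Rightarrow> 'a::complete_lattice) set" where
  "AE E = {f. \<forall>e. e \<notin> E \<longrightarrow> f e = bot}"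

definition diaP :: "'e set \<Rightarrow> ('e \<times> 'e) set \<Rightarrow> ('a::complete_lattice \<Rightarrow> 'a) \<Rightarrow> ('e \<Rightarrow> 'a) \<Rightarrow> ('e \<Rightarrow> 'a)" where
  "diaP E s D f = (\<lambda>e. if e \<in> E then Sup {D (f e') | e'. e' \<in> E \<and> (e', e) \<in> s} else bot)"

definition MinP :: "'e set \<Rightarrow> ('e \<times> 'e) set \<Rightarrow> ('a::complete_lattice \<Rightarrow> 'a) \<Rightarrow> ('e \<Rightarrow> 'a) set" where
  "MinP E s D = minimal_elts (AE E) (\<le>) bot (diaP E s D)"

definition MinP_down :: "'e set \<Rightarrow> ('e \<times> 'e) set \<Rightarrow> ('a::complete_lattice \<Rightarrow> 'a) \<Rightarrow> ('e \<Rightarrow> 'a) set" where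
  "MinP_down E s D = {g \<in> AE E. \<exists>f\<in>MinP E s D. g \<le> f}"

text \<open>mu'_i (formula; its domain is MinP_down).\<close>
definition muP :: "'e set \<Rightarrow> ('e \<Rightarrow> real) \<Rightarrow> 'a::complete_lattice multiset \<Rightarrow> ('e \<Rightarrow> 'a \<times> nat \<Rightarrow> real)
     \<Rightarrow> ('a \<Rightarrow> real) \<Rightarrow> ('e \<Rightarrow> 'a) \<Rightarrow> real" where
  "muP E Pi Phi pre m f = (\<Sum>e\<in>E. \<Sum>p\<in>copies Phi. Pi e * mu_a m Phi p (f e) * pre e p)"

definition prebar :: "'e set \<Rightarrow> 'a::complete_lattice multiset \<Rightarrow> ('e \<Rightarrow> 'a \<times> nat \<Rightarrow> real) \<Rightarrow> ('e \<Rightarrow> 'a)" where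
  "prebar E Phi pre = (\<lambda>e. if e \<in> E then Sup {fst p | p. p \<in> copies Phi \<and> pre e p \<noteq> 0} else bot)"

definition qclass :: "'e set \<Rightarrow> ('e \<Rightarrow> 'a::complete_lattice) \<Rightarrow> ('e \<Rightarrow> 'a) \<Rightarrow> ('e \<Rightarrow> 'a) set" where
  "qclass E c g = {h \<in> AE E. inf h c = inf g c}"

definition Qcarrier :: "'e set \<Rightarrow> ('e \<Rightarrow> 'a::complete_lattice) \<Rightarrow> ('e \<Rightarrow> 'a) set set" where
  "Qcarrier E c = qclass E c ` AE E"

definition qle :: "('e \<Rightarrow> 'a::complete_lattice) \<Rightarrow> ('e \<Rightarrow> 'a) set \<Rightarrow> ('e \<Rightarrow> 'a) set \<Rightarrow> bool" where
  "qle c X Y \<longleftrightarrow> (\<exists>x\<in>X. \<exists>y\<in>Y. inf x c \<le> inf y c)"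

definition qdia :: "'e set \<Rightarrow> ('e \<times> 'e) set \<Rightarrow> ('a::complete_lattice \<Rightarrow> 'a) \<Rightarrow> ('e \<Rightarrow> 'a)
     \<Rightarrow> ('e \<Rightarrow> 'a) set \<Rightarrow> ('e \<Rightarrow> 'a) set" where
  "qdia E s D c X = qclass E c (diaP E s D (inf (SOME x. x \<in> X) c))"

definition MinQ :: "'e set \<Rightarrow> ('e \<times> 'e) set \<Rightarrow> ('a::complete_lattice \<Rightarrow> 'a) \<Rightarrow> ('e \<Rightarrow> 'a)
     \<Rightarrow> ('e \<Rightarrow> 'a) set set" where
  "MinQ E s D c = minimal_elts (Qcarrier E c) (qle c) (qclass E c bot) (qdia E s D c)"

definition MinQ_down :: "'e set \<Rightarrow> ('e \<times> 'e) set \<Rightarrow> ('a::complete_lattice \<Rightarrow> 'a) \<Rightarrow> ('e \<Rightarrow> 'a)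
     \<Rightarrow> ('e \<Rightarrow> 'a) set set" where
  "MinQ_down E s D c = {X \<in> Qcarrier E c. \<exists>F\<in>MinQ E s D c. qle c X F}"

end

theory Submission
  imports Defs
begin

text \<open>An i-minimal element of the product algebra is an i-minimal element c0 of A placed
on a single \<open>\<sim>\<^sub>i\<close>-class. A nonzero class [g] below an i-minimal class [f] of the
pseudo-quotient has a unique such [f], because the meet of two fixed classes above [g] is
again a nonzero fixed class; moreover the representative f \<sqinter> c lies below an i-minimal
element of the product, so g \<sqinter> c and f \<sqinter> c are in the domain of \<open>\<mu>'\<^sub>i\<close>.
The value \<open>\<mu>'\<^sub>i\<close>(f) only depends on the entries f(e) \<sqinter> a with pre(e | a) \<noteq> 0,
all of which lie below c, so it does not depend on the representative. Finally, if
f \<sqinter> c is nonzero at e, pick a copy a \<in> \<Phi> minimal among those with pre(e | a) \<noteq> 0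
and f(e) \<sqinter> a \<noteq> \<bottom>: its maximal predecessors b still have pre(e | b) \<noteq> 0, so f(e)
misses them and \<open>\<mu>\<^sup>a\<^sub>i\<close>(f(e)) = \<open>\<mu>\<^sub>i\<close>(f(e) \<sqinter> a) > 0, while all other summands are
nonnegative since the maximal predecessors are pairwise disjoint.\<close>

lemma heyting_imp_iff: "heyting_imp imp \<Longrightarrow> x \<le> imp a b \<longleftrightarrow> inf x a \<le> b"
  by (simp add: heyting_imp_def)

lemma heyting_inf_sup_distrib:
  fixes imp :: "'a::complete_lattice \<Rightarrow> 'a \<Rightarrow> 'a" and x a b :: 'a
  assumes "heyting_imp imp"
  shows "inf x (sup a b) = sup (inf x a) (inf x b)"
proof (rule antisym)
  have "a \<le> imp x (sup (inf x a) (inf x b))" and "b \<le> imp x (sup (inf x a) (inf x b))"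
    using heyting_imp_iff[OF assms] by (simp_all add: inf_commute le_supI1 le_supI2)
  then have "sup a b \<le> imp x (sup (inf x a) (inf x b))" by simp
  then show "inf x (sup a b) \<le> sup (inf x a) (inf x b)"
    using heyting_imp_iff[OF assms] by (simp add: inf_commute)
qed (simp add: le_infI2)

lemma heyting_inf_Sup_eq_bot:
  fixes imp :: "'a::complete_lattice \<Rightarrow> 'a \<Rightarrow> 'a" and x :: 'a
  assumes "heyting_imp imp" and "\<forall>s\<in>S. inf x s = bot"
  shows "inf x (Sup S) = bot"
proof -
  have "\<forall>s\<in>S. s \<le> imp x bot"
    using assms heyting_imp_iff[OF assms(1)] by (simp add: inf_commute)
  then have "Sup S \<le> imp x bot" by (simp add: Sup_least)
  then have "inf (Sup S) x \<le> bot" using heyting_imp_iff[OF assms(1)] by blast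
  then show ?thesis by (simp add: inf_commute bot_unique)
qed

locale monadic_ops =
  fixes imp :: "'a::{finite,complete_lattice} \<Rightarrow> 'a \<Rightarrow> 'a" and D B :: "'a \<Rightarrow> 'a"
  assumes heyting: "heyting_imp imp"
    and mono_D: "mono D" and mono_B: "mono B"
    and D_ext: "\<And>a. a \<le> D a" and B_deflationary: "\<And>a. B a \<le> a"
    and D_le_B_D: "\<And>a. D a \<le> B (D a)" and D_B_le_B: "\<And>a. D (B a) \<le> B a"
    and B_imp_le: "\<And>a b. B (imp a b) \<le> imp (D a) (D b)"
    and D_bot_le: "D bot \<le> bot"
begin

lemma D_bot: "D bot = bot"
  using D_bot_le bot_unique by blast

lemma D_idem: "D (D a) = D a"
proof (rule antisym)
  have "D (D a) \<le> D (B (D a))" using mono_D D_le_B_D by (simp add: monoD)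
  also have "\<dots> \<le> B (D a)" by (rule D_B_le_B)
  also have "\<dots> \<le> D a" by (rule B_deflationary)
  finally show "D (D a) \<le> D a" .
qed (rule D_ext)

lemma inf_D_le_D_inf: "inf (D x) (D b) \<le> D (inf x (D b))"
proof -
  have "D b \<le> imp x (inf x (D b))" using heyting_imp_iff[OF heyting] by (simp add: inf_commute)
  then have "B (D b) \<le> B (imp x (inf x (D b)))" using mono_B by (simp add: monoD)
  then have "D b \<le> imp (D x) (D (inf x (D b)))" using D_le_B_D B_imp_le order_trans by metis
  then show ?thesis using heyting_imp_iff[OF heyting] by (simp add: inf_commute)
qed

lemma MinA_D_eq: "c0 \<in> MinA D \<Longrightarrow> D c0 = c0"
  and MinA_neq_bot: "c0 \<in> MinA D \<Longrightarrow> c0 \<noteq> bot"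
  and MinA_minimal: "c0 \<in> MinA D \<Longrightarrow> d \<le> c0 \<Longrightarrow> D d = d \<Longrightarrow> d \<noteq> bot \<Longrightarrow> d = c0"
  by (auto simp: MinA_def minimal_elts_def)

text \<open>If c0 missed a, then a \<le> \<not>c0, and \<open>\<diamond>\<close>\<not>c0 \<sqinter> c0 \<le> \<open>\<diamond>\<close>(\<not>c0 \<sqinter> c0) = \<bottom> by inf_D_le_D_inf.\<close>
lemma MinA_le_D_inf_neq_bot:
  assumes c0: "c0 \<in> MinA D" and le: "c0 \<le> D a"
  shows "inf c0 a \<noteq> bot"
proof
  assume "inf c0 a = bot"
  then have "a \<le> imp c0 bot" using heyting_imp_iff[OF heyting] by (simp add: inf_commute)
  then have c0_le: "c0 \<le> D (imp c0 bot)" using le mono_D order_trans by (metis monoD)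
  have "inf (imp c0 bot) c0 = bot" using heyting_imp_iff[OF heyting] bot_unique by blast
  then have "inf (D (imp c0 bot)) c0 \<le> bot"
    using inf_D_le_D_inf[of "imp c0 bot" c0] MinA_D_eq[OF c0] D_bot by simp
  with c0_le have "c0 \<le> bot" by (metis inf.absorb2 inf_commute)
  with MinA_neq_bot[OF c0] show False using bot_unique by blast
qed

lemma exists_MinA_le:
  assumes "z \<noteq> bot" "D z = z"
  shows "\<exists>c0\<in>MinA D. c0 \<le> z"
proof -
  let ?S = "{w. w \<noteq> bot \<and> D w = w \<and> w \<le> z}"
  obtain m where m: "m \<in> ?S" "\<forall>b\<in>?S. b \<le> m \<longrightarrow> m = b"
    using finite_has_minimal2[of ?S z] assms by auto
  then have "m \<in> MinA D" unfolding MinA_def minimal_elts_def by auto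
  then show ?thesis using m by blast
qed

end

locale monadic_power = monadic_ops imp D B for imp :: "'a::{finite,complete_lattice} \<Rightarrow> 'a \<Rightarrow> 'a" and D B +
  fixes E :: "'e set" and s :: "('e \<times> 'e) set"
  assumes equiv_s: "equiv E s"
begin

lemma s_refl: "x \<in> E \<Longrightarrow> (x, x) \<in> s"
  using equiv_s by (auto simp: equiv_def refl_on_def)

lemma s_sym: "(x, y) \<in> s \<Longrightarrow> (y, x) \<in> s"
  using equiv_s by (auto simp: equiv_def dest: symD)

lemma s_trans: "(x, y) \<in> s \<Longrightarrow> (y, z) \<in> s \<Longrightarrow> (x, z) \<in> s"
  using equiv_s by (auto simp: equiv_def dest: transD)

lemma diaP_AE: "diaP E s D f \<in> AE E"
  by (simp add: diaP_def AE_def)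

lemma diaP_upper: "e \<in> E \<Longrightarrow> e' \<in> E \<Longrightarrow> (e', e) \<in> s \<Longrightarrow> D (f e') \<le> diaP E s D f e"
  unfolding diaP_def by (auto intro!: Sup_upper)

lemma diaP_least:
  "e \<in> E \<Longrightarrow> (\<And>e'. e' \<in> E \<Longrightarrow> (e', e) \<in> s \<Longrightarrow> D (f e') \<le> z) \<Longrightarrow> diaP E s D f e \<le> z"
  unfolding diaP_def by (auto intro!: Sup_least)

lemma diaP_outside: "e \<notin> E \<Longrightarrow> diaP E s D f e = bot"
  unfolding diaP_def by simp

lemma diaP_ext:
  assumes "f \<in> AE E" shows "f \<le> diaP E s D f"
proof (rule le_funI)
  fix e show "f e \<le> diaP E s D f e"
  proof (cases "e \<in> E")
    case True
    then show ?thesis using diaP_upper[OF True True s_refl[OF True], of f] D_ext order_trans by blast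
  qed (use assms in \<open>simp add: AE_def\<close>)
qed

lemma diaP_mono: "f \<le> g \<Longrightarrow> diaP E s D f \<le> diaP E s D g"
proof (rule le_funI)
  fix e assume fg: "f \<le> g"
  show "diaP E s D f e \<le> diaP E s D g e"
  proof (cases "e \<in> E")
    case True
    show ?thesis
    proof (rule diaP_least[OF True])
      fix e' assume "e' \<in> E" "(e', e) \<in> s"
      have "D (f e') \<le> D (g e')" using fg mono_D by (simp add: le_funD monoD)
      also have "\<dots> \<le> diaP E s D g e" using diaP_upper[OF True \<open>e' \<in> E\<close> \<open>(e', e) \<in> s\<close>] .
      finally show "D (f e') \<le> diaP E s D g e" .
    qed
  qed (simp add: diaP_outside)
qed

lemma diaP_fixed_entry:
  assumes "diaP E s D f = f" "e \<in> E" shows "D (f e) = f e"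
  using diaP_upper[OF assms(2) assms(2) s_refl[OF assms(2)], of f] assms(1) D_ext
  by (simp add: antisym)

definition on_class :: "'a \<Rightarrow> 'e \<Rightarrow> 'e \<Rightarrow> 'a" where
  "on_class c0 e0 = (\<lambda>e. if e \<in> E \<and> (e, e0) \<in> s then c0 else bot)"

lemma on_class_AE: "on_class c0 e0 \<in> AE E"
  by (simp add: on_class_def AE_def)

lemma on_class_neq_bot:
  assumes "e0 \<in> E" "c0 \<noteq> bot" shows "on_class c0 e0 \<noteq> bot"
proof
  assume "on_class c0 e0 = bot"
  then have "on_class c0 e0 e0 = bot" by simp
  then show False using assms s_refl by (simp add: on_class_def)
qed

lemma diaP_on_class: assumes "D c0 = c0" shows "diaP E s D (on_class c0 e0) = on_class c0 e0"
proof (rule antisym)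
  show "on_class c0 e0 \<le> diaP E s D (on_class c0 e0)" by (rule diaP_ext[OF on_class_AE])
  show "diaP E s D (on_class c0 e0) \<le> on_class c0 e0"
  proof (rule le_funI)
    fix e
    show "diaP E s D (on_class c0 e0) e \<le> on_class c0 e0 e"
    proof (cases "e \<in> E")
      case True
      show ?thesis
      proof (rule diaP_least[OF True])
        fix e' assume "e' \<in> E" "(e', e) \<in> s"
        show "D (on_class c0 e0 e') \<le> on_class c0 e0 e"
        proof (cases "(e', e0) \<in> s")
          case True
          then have "(e, e0) \<in> s" using s_trans[OF s_sym[OF \<open>(e', e) \<in> s\<close>]] by blast
          then show ?thesis using True assms \<open>e' \<in> E\<close> \<open>e \<in> E\<close> by (simp add: on_class_def)
        qed (simp add: on_class_def D_bot)
      qed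
    qed (simp add: diaP_outside)
  qed
qed


lemma MinP_le_MinA:
  assumes f0: "f0 \<in> MinP E s D"
  shows "\<exists>c0\<in>MinA D. \<forall>e. f0 e \<le> c0"
proof -
  have AE: "f0 \<in> AE E" and fixed: "diaP E s D f0 = f0"
    and minimal: "\<And>d. d \<in> AE E \<Longrightarrow> d \<le> f0 \<Longrightarrow> diaP E s D d = d \<Longrightarrow> d \<noteq> bot \<Longrightarrow> d = f0"
    using f0 by (auto simp: MinP_def minimal_elts_def)
  have "f0 \<noteq> bot" using f0 by (simp add: MinP_def minimal_elts_def)
  then obtain e0 where e0: "f0 e0 \<noteq> bot" by (metis bot_fun_def HOL.ext)
  then have e0E: "e0 \<in> E" using AE by (auto simp: AE_def)
  obtain c0 where c0: "c0 \<in> MinA D" "c0 \<le> f0 e0"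
    using exists_MinA_le e0 diaP_fixed_entry[OF fixed e0E] by blast
  have "on_class c0 e0 \<le> f0"
  proof (rule le_funI)
    fix e show "on_class c0 e0 e \<le> f0 e"
    proof (cases "e \<in> E \<and> (e, e0) \<in> s")
      case True
      then have "f0 e0 \<le> f0 e"
        using diaP_upper[OF _ e0E s_sym] fixed D_ext order_trans by metis
      then show ?thesis using True c0(2) by (simp add: on_class_def)
    qed (auto simp: on_class_def)
  qed
  then have "f0 = on_class c0 e0"
    using minimal[OF on_class_AE] diaP_on_class[OF MinA_D_eq[OF c0(1)]]
      on_class_neq_bot[OF e0E MinA_neq_bot[OF c0(1)]]
    by blast
  then show ?thesis using c0(1) by (auto simp: on_class_def)
qed

lemma on_class_MinP:
  assumes c0: "c0 \<in> MinA D" and e0E: "e0 \<in> E"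
  shows "on_class c0 e0 \<in> MinP E s D"
proof -
  have "d = bot"
    if d: "d \<in> AE E" "d \<le> on_class c0 e0" "d \<noteq> on_class c0 e0" "diaP E s D d = d" for d
  proof (rule ccontr)
    assume "d \<noteq> bot"
    then obtain e1 where e1: "d e1 \<noteq> bot" by (metis bot_fun_def HOL.ext)
    have "d e1 \<le> on_class c0 e0 e1" using d(2) by (simp add: le_funD)
    then have e1s: "e1 \<in> E" "(e1, e0) \<in> s" and "d e1 \<le> c0"
      using e1 by (auto simp: on_class_def bot_unique split: if_splits)
    then have de1: "d e1 = c0" using MinA_minimal[OF c0] diaP_fixed_entry[OF d(4)] e1 by blast
    have "d = on_class c0 e0"
    proof (rule HOL.ext)
      fix e show "d e = on_class c0 e0 e"
      proof (cases "e \<in> E \<and> (e, e0) \<in> s")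
        case True
        then have "c0 \<le> d e"
          using diaP_upper[OF _ e1s(1) s_trans[OF e1s(2) s_sym]] d(4) de1 D_ext order_trans
          by metis
        moreover have "d e \<le> c0" using le_funD[OF d(2), of e] True by (simp add: on_class_def)
        ultimately show ?thesis using True by (simp add: on_class_def)
      next
        case False
        then show ?thesis using le_funD[OF d(2), of e] by (auto simp: on_class_def bot_unique)
      qed
    qed
    then show False using d(3) by simp
  qed
  then show ?thesis
    using on_class_neq_bot[OF e0E MinA_neq_bot[OF c0]] on_class_AE diaP_on_class[OF MinA_D_eq[OF c0]]
    unfolding MinP_def minimal_elts_def by blast
qed

end

lemma finite_copies: "finite (copies Phi)"
proof -
  have "copies Phi \<subseteq> (SIGMA x:set_mset Phi. {1..count Phi x})"
    by (auto simp: copies_def simp flip: count_greater_zero_iff)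
  then show ?thesis by (rule finite_subset) auto
qed

lemma copies_fst_in_mset: "p \<in> copies Phi \<Longrightarrow> fst p \<in># Phi"
  by (auto simp: copies_def simp flip: count_greater_zero_iff)

lemma copy_less_fst_le: "copy_less q p \<Longrightarrow> fst q \<le> fst p"
  by (auto simp: copy_less_def)

lemma mb_subset_copies: "mb Phi p \<subseteq> copies Phi"
  by (auto simp: mb_def)

lemma mb_copy_less: "q \<in> mb Phi p \<Longrightarrow> copy_less q p"
  by (auto simp: mb_def)

lemma finite_mb: "finite (mb Phi p)"
  using finite_subset[OF mb_subset_copies finite_copies] .

lemma mb_disjoint:
  assumes chain: "\<forall>a\<in>#Phi. \<forall>b\<in>#Phi. a \<noteq> b \<longrightarrow> inf a b = bot \<or> a < b \<or> b < a"
    and q1: "q1 \<in> mb Phi p" and q2: "q2 \<in> mb Phi p" and "q1 \<noteq> q2"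
  shows "inf (fst q1) (fst q2) = (bot::'a::complete_lattice)"
proof -
  have incomparable: "\<not> copy_less q1 q2" "\<not> copy_less q2 q1"
    using q1 q2 by (auto simp: mb_def)
  show ?thesis
  proof (cases "fst q1 = fst q2")
    case True
    then have "snd q1 \<noteq> snd q2" using \<open>q1 \<noteq> q2\<close> by (metis prod.expand)
    then show ?thesis using True incomparable by (auto simp: copy_less_def)
  next
    case False
    have "fst q1 \<in># Phi" "fst q2 \<in># Phi"
      using q1 q2 mb_subset_copies copies_fst_in_mset by blast+
    then show ?thesis using chain False incomparable by (auto simp: copy_less_def)
  qed
qed

lemma exists_copy_less_minimal:
  assumes "p \<in> Q" "Q \<subseteq> copies Phi"
  shows "\<exists>p0\<in>Q. \<forall>q. copy_less q p0 \<longrightarrow> q \<notin> Q"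
proof -
  define R where "R = {(q, p). q \<in> copies Phi \<and> p \<in> copies Phi \<and> copy_less q p}"
  have "finite R"
    using finite_subset[of R "copies Phi \<times> copies Phi"] finite_copies by (auto simp: R_def)
  moreover have "acyclic R"
  proof -
    have "trans R" unfolding R_def trans_def copy_less_def by auto
    then show ?thesis unfolding acyclic_def by (auto simp: R_def copy_less_def)
  qed
  ultimately have "wf R" by (rule finite_acyclic_wf)
  then obtain p0 where "p0 \<in> Q" "\<forall>q. (q, p0) \<in> R \<longrightarrow> q \<notin> Q"
    using assms(1) unfolding wf_eq_minimal by blast
  then show ?thesis using assms(2) by (auto simp: R_def)
qed

lemma exists_copy_meeting_prebar:
  fixes imp :: "'a::complete_lattice \<Rightarrow> 'a \<Rightarrow> 'a" and x :: 'a
  assumes "heyting_imp imp" and meets: "inf x (prebar E Phi pre e) \<noteq> bot"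
  shows "e \<in> E" and "\<exists>p\<in>copies Phi. pre e p \<noteq> 0 \<and> inf x (fst p) \<noteq> bot"
proof -
  show "e \<in> E" using meets by (auto simp: prebar_def split: if_splits)
  show "\<exists>p\<in>copies Phi. pre e p \<noteq> 0 \<and> inf x (fst p) \<noteq> bot"
  proof (rule ccontr)
    assume "\<not> ?thesis"
    then have "\<forall>y\<in>{fst p | p. p \<in> copies Phi \<and> pre e p \<noteq> 0}. inf x y = bot" by auto
    then have "inf x (Sup {fst p | p. p \<in> copies Phi \<and> pre e p \<noteq> 0}) = bot"
      by (rule heyting_inf_Sup_eq_bot[OF assms(1)])
    with meets \<open>e \<in> E\<close> show False by (simp add: prebar_def)
  qed
qed

locale measure_atom =
  fixes imp :: "'a::{finite,complete_lattice} \<Rightarrow> 'a \<Rightarrow> 'a" and D :: "'a \<Rightarrow> 'a"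
    and m :: "'a \<Rightarrow> real" and c0 :: 'a
  assumes heyting: "heyting_imp imp" and measure: "i_measure D m" and atom: "c0 \<in> MinA D"
begin

lemma in_domain: "x \<le> c0 \<Longrightarrow> x \<in> MinA_down D"
  using atom by (auto simp: MinA_down_def)

lemma m_mono: "x \<le> y \<Longrightarrow> y \<le> c0 \<Longrightarrow> m x \<le> m y"
  using measure in_domain[of x] in_domain[of y] by (auto simp: i_measure_def i_premeasure_def)

lemma m_strict_mono: "x < y \<Longrightarrow> y \<le> c0 \<Longrightarrow> m x < m y"
  using measure atom by (auto simp: i_measure_def)

lemma m_bot: "m bot = 0"
  using measure in_domain[of c0] by (auto simp: i_measure_def i_premeasure_def)

lemma m_sup: "b \<le> c0 \<Longrightarrow> c \<le> c0 \<Longrightarrow> m (sup b c) = m b + m c - m (inf b c)"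
  using measure atom by (auto simp: i_measure_def i_premeasure_def)

lemma sum_m_inf_disjoint:
  assumes "finite S" "\<forall>q1\<in>S. \<forall>q2\<in>S. q1 \<noteq> q2 \<longrightarrow> inf (fst q1) (fst q2) = bot"
    and "x \<le> c0"
  shows "(\<Sum>q\<in>S. m (inf x (fst q))) = m (inf x (Sup (fst ` S)))"
  using assms
proof (induction S rule: finite_induct)
  case empty
  then show ?case using m_bot by simp
next
  case (insert q S)
  have "inf (fst q) (Sup (fst ` S)) = bot"
    by (rule heyting_inf_Sup_eq_bot[OF heyting]) (use insert in auto)
  then have "inf (inf x (fst q)) (inf x (Sup (fst ` S))) = bot"
    by (metis inf.left_commute inf_bot_right inf_commute inf.assoc)
  moreover have "inf x (Sup (fst ` insert q S)) = sup (inf x (fst q)) (inf x (Sup (fst ` S)))"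
    by (simp add: heyting_inf_sup_distrib[OF heyting])
  ultimately have "m (inf x (Sup (fst ` insert q S))) = m (inf x (fst q)) + m (inf x (Sup (fst ` S)))"
    using m_sup[of "inf x (fst q)" "inf x (Sup (fst ` S))"] insert.prems(2) m_bot
    by (simp add: le_infI1)
  then show ?case using insert by simp
qed

lemma mu_a_nonneg:
  assumes chain: "\<forall>a\<in>#Phi. \<forall>b\<in>#Phi. a \<noteq> b \<longrightarrow> inf a b = bot \<or> a < b \<or> b < a"
    and "x \<le> c0"
  shows "0 \<le> mu_a m Phi p x"
proof -
  have "(\<Sum>q\<in>mb Phi p. m (inf x (fst q))) = m (inf x (Sup (fst ` mb Phi p)))"
    by (rule sum_m_inf_disjoint[OF finite_mb _ \<open>x \<le> c0\<close>]) (use mb_disjoint[OF chain] in blast)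
  moreover have "Sup (fst ` mb Phi p) \<le> fst p"
    using mb_copy_less copy_less_fst_le by (blast intro: Sup_least)
  then have "m (inf x (Sup (fst ` mb Phi p))) \<le> m (inf x (fst p))"
    using m_mono \<open>x \<le> c0\<close> by (meson inf_mono order_refl le_infI1)
  ultimately show ?thesis by (simp add: mu_a_def)
qed

lemma mu_a_pos:
  assumes "x \<le> c0" "inf x (fst p) \<noteq> bot" "\<forall>q\<in>mb Phi p. inf x (fst q) = bot"
  shows "0 < mu_a m Phi p x"
proof -
  have "bot < inf x (fst p)" using assms(2) by (simp add: bot_less)
  then have "0 < m (inf x (fst p))"
    using m_strict_mono[of bot] m_bot assms(1) by (simp add: le_infI1)
  then show ?thesis using assms(3) m_bot by (simp add: mu_a_def)
qed

end

lemma AE_inf: "f \<in> AE E \<Longrightarrow> inf f g \<in> AE E"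
  by (simp add: AE_def)

lemma mem_qclass: "h \<in> qclass E c x \<longleftrightarrow> h \<in> AE E \<and> inf h c = inf x c"
  by (simp add: qclass_def)

lemma qclass_eq_iff: "a \<in> AE E \<Longrightarrow> qclass E c a = qclass E c b \<longleftrightarrow> inf a c = inf b c"
  by (auto simp: qclass_def)

lemma QcarrierE:
  assumes "X \<in> Qcarrier E c" obtains x where "x \<in> AE E" "X = qclass E c x"
  using assms by (auto simp: Qcarrier_def)

lemma qclass_in_Qcarrier: "x \<in> AE E \<Longrightarrow> qclass E c x \<in> Qcarrier E c"
  by (auto simp: Qcarrier_def)

lemma qle_qclass:
  "x \<in> AE E \<Longrightarrow> y \<in> AE E \<Longrightarrow> qle c (qclass E c x) (qclass E c y) \<longleftrightarrow> inf x c \<le> inf y c"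
  unfolding qle_def by (auto simp: mem_qclass)

text \<open>The choice in the definition of qdia is harmless: all representatives agree on c.\<close>
lemma qdia_qclass:
  assumes "x \<in> AE E"
  shows "qdia E s D c (qclass E c x) = qclass E c (diaP E s D (inf x c))"
proof -
  have "x \<in> qclass E c x" using assms by (simp add: mem_qclass)
  then have "inf (SOME y. y \<in> qclass E c x) c = inf x c"
    using someI[of "\<lambda>y. y \<in> qclass E c x"] by (simp add: mem_qclass)
  then show ?thesis unfolding qdia_def by (metis inf.assoc inf.idem)
qed

context monadic_power
begin

lemma MinQ_Qcarrier: "F \<in> MinQ E s D c \<Longrightarrow> F \<in> Qcarrier E c"
  and MinQ_neq_bot: "F \<in> MinQ E s D c \<Longrightarrow> F \<noteq> qclass E c bot"
  and MinQ_qdia_eq: "F \<in> MinQ E s D c \<Longrightarrow> qdia E s D c F = F"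
  and MinQ_minimal: "F \<in> MinQ E s D c \<Longrightarrow> X \<in> Qcarrier E c \<Longrightarrow> qle c X F \<Longrightarrow>
    qdia E s D c X = X \<Longrightarrow> X \<noteq> qclass E c bot \<Longrightarrow> X = F"
  unfolding MinQ_def minimal_elts_def by blast+

lemma MinQ_diaP_inf_eq:
  assumes "F \<in> MinQ E s D c" "f \<in> AE E" "F = qclass E c f"
  shows "inf (diaP E s D (inf f c)) c = inf f c"
  using MinQ_qdia_eq[OF assms(1)] qdia_qclass[OF assms(2)] assms(3) qclass_eq_iff[OF diaP_AE]
  by simp

lemma MinQ_eq_of_fixed_below:
  assumes F: "F \<in> MinQ E s D c" "f \<in> AE E" "F = qclass E c f"
    and y: "y \<in> AE E" "y \<le> inf f c" "y \<noteq> bot" and fixed: "inf (diaP E s D y) c \<le> y"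
  shows "y = inf f c"
proof -
  have yc: "inf y c = y" using y(2) by (simp add: inf.absorb1 le_infE)
  have "y \<le> inf (diaP E s D y) c" using diaP_ext[OF y(1)] yc by (metis inf_mono order_refl)
  then have "inf (diaP E s D y) c = inf y c" using antisym[OF fixed] yc by simp
  then have "qdia E s D c (qclass E c y) = qclass E c y"
    using qdia_qclass[OF y(1)] yc qclass_eq_iff[OF diaP_AE] by simp
  moreover have "qclass E c y \<noteq> qclass E c bot" using qclass_eq_iff[OF y(1)] yc y(3) by simp
  moreover have "qle c (qclass E c y) F" using qle_qclass[OF y(1) F(2)] F(3) yc y(2) by simp
  ultimately have "qclass E c y = F"
    using MinQ_minimal[OF F(1) qclass_in_Qcarrier[OF y(1)]] by blast
  then show ?thesis using qclass_eq_iff[OF y(1)] F(3) yc by simp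
qed

lemma MinQ_above_unique:
  assumes x: "x \<in> AE E" "qclass E c x \<noteq> qclass E c bot"
    and F1: "F1 \<in> MinQ E s D c" "qle c (qclass E c x) F1"
    and F2: "F2 \<in> MinQ E s D c" "qle c (qclass E c x) F2"
  shows "F1 = F2"
proof -
  obtain f1 where f1: "f1 \<in> AE E" "F1 = qclass E c f1"
    using MinQ_Qcarrier[OF F1(1)] by (rule QcarrierE)
  obtain f2 where f2: "f2 \<in> AE E" "F2 = qclass E c f2"
    using MinQ_Qcarrier[OF F2(1)] by (rule QcarrierE)
  define y where "y = inf (inf f1 c) (inf f2 c)"
  have yA: "y \<in> AE E" using f1 by (simp add: y_def AE_inf)
  have "inf x c \<le> y" using F1(2) F2(2) f1 f2 qle_qclass[OF x(1)] by (simp add: y_def)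
  moreover have "inf x c \<noteq> bot" using qclass_eq_iff[OF x(1)] x(2) by simp
  ultimately have ynb: "y \<noteq> bot" using bot_unique by blast
  have y_le: "y \<le> inf f1 c" "y \<le> inf f2 c" unfolding y_def by (rule inf.cobounded1, rule inf.cobounded2)
  then have "inf (diaP E s D y) c \<le> inf (diaP E s D (inf f1 c)) c"
    and "inf (diaP E s D y) c \<le> inf (diaP E s D (inf f2 c)) c"
    using diaP_mono inf_mono order_refl by blast+
  then have fixed: "inf (diaP E s D y) c \<le> y"
    using MinQ_diaP_inf_eq[OF F1(1) f1] MinQ_diaP_inf_eq[OF F2(1) f2] by (simp add: y_def)
  have "y = inf f1 c" by (rule MinQ_eq_of_fixed_below[OF F1(1) f1 yA y_le(1) ynb fixed])
  moreover have "y = inf f2 c" by (rule MinQ_eq_of_fixed_below[OF F2(1) f2 yA y_le(2) ynb fixed])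
  ultimately show ?thesis using f1 f2 qclass_eq_iff[OF f1(1)] by simp
qed

lemma MinQ_inf_le_MinP:
  assumes F: "F \<in> MinQ E s D c" "f \<in> AE E" "F = qclass E c f"
  shows "\<exists>f0\<in>MinP E s D. inf f c \<le> f0"
proof -
  define y where "y = inf f c"
  have yA: "y \<in> AE E" using F(2) by (simp add: y_def AE_inf)
  have "y \<noteq> bot" using MinQ_neq_bot[OF F(1)] F(3) qclass_eq_iff[OF F(2)] by (simp add: y_def)
  then obtain e0 where e0: "y e0 \<noteq> bot" by (metis bot_fun_def HOL.ext)
  have e0E: "e0 \<in> E" using e0 yA by (auto simp: AE_def)
  have "D (y e0) \<noteq> bot" using e0 D_ext[of "y e0"] bot_unique by metis
  then obtain c0 where c0: "c0 \<in> MinA D" "c0 \<le> D (y e0)" using exists_MinA_le D_idem by blast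
  define f0 where "f0 = on_class c0 e0"
  have f0M: "f0 \<in> MinP E s D" unfolding f0_def by (rule on_class_MinP[OF c0(1) e0E])
  define z where "z = inf f0 y"
  have zA: "z \<in> AE E" using on_class_AE by (simp add: z_def f0_def AE_inf)
  have "z e0 = inf c0 (y e0)" using e0E s_refl[OF e0E] by (simp add: z_def f0_def on_class_def)
  then have znb: "z \<noteq> bot" using MinA_le_D_inf_neq_bot[OF c0] by (metis bot_fun_def)
  have "inf (diaP E s D z) c \<le> inf (diaP E s D y) c"
    using diaP_mono[of z y] by (simp add: z_def le_infI1)
  moreover have "diaP E s D z \<le> f0"
    using diaP_mono[of z f0] diaP_on_class[OF MinA_D_eq[OF c0(1)]] by (simp add: z_def f0_def)
  ultimately have "inf (diaP E s D z) c \<le> z"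
    using MinQ_diaP_inf_eq[OF F] by (simp add: z_def y_def le_infI1)
  then have "z = inf f c" by (rule MinQ_eq_of_fixed_below[OF F zA _ znb, rotated])
      (unfold z_def y_def, rule inf.cobounded2)
  then have "y \<le> f0" by (metis y_def z_def inf.cobounded1)
  then show ?thesis using f0M by (auto simp: y_def)
qed

lemma MinQ_reps_MinP_down:
  assumes X: "X \<in> Qcarrier E c" and F: "F \<in> MinQ E s D c" "qle c X F"
  shows "\<exists>g\<in>X. \<exists>f\<in>F. g \<in> MinP_down E s D \<and> f \<in> MinP_down E s D"
proof -
  obtain x where x: "x \<in> AE E" "X = qclass E c x" using X by (rule QcarrierE)
  obtain f where f: "f \<in> AE E" "F = qclass E c f" using MinQ_Qcarrier[OF F(1)] by (rule QcarrierE)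
  obtain f0 where f0: "f0 \<in> MinP E s D" "inf f c \<le> f0" using MinQ_inf_le_MinP[OF F(1) f] by blast
  have "inf x c \<le> inf f c" using F(2) x(2) f(2) qle_qclass[OF x(1) f(1)] by simp
  then have "inf x c \<le> f0" using f0(2) by (rule order_trans)
  then have "inf x c \<in> X \<and> inf f c \<in> F \<and> inf x c \<in> MinP_down E s D \<and> inf f c \<in> MinP_down E s D"
    using x f f0 AE_inf unfolding MinP_down_def by (auto simp: mem_qclass inf.assoc)
  then show ?thesis by blast
qed

end

text \<open>Entries of g outside c are invisible to \<open>\<mu>'\<close>: every copy with nonzero weight at e,
and hence each of its maximal predecessors, lies below c(e).\<close>
lemma muP_cong:
  assumes "inf g (prebar E Phi pre) = inf g' (prebar E Phi pre)"
  shows "muP E Pi Phi pre m g = muP E Pi Phi pre m g'"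
  unfolding muP_def
proof (intro sum.cong refl)
  fix e p assume "e \<in> E" "p \<in> copies Phi"
  show "Pi e * mu_a m Phi p (g e) * pre e p = Pi e * mu_a m Phi p (g' e) * pre e p"
  proof (cases "pre e p = 0")
    case False
    then have "fst p \<in> {fst p | p. p \<in> copies Phi \<and> pre e p \<noteq> 0}"
      using \<open>p \<in> copies Phi\<close> by blast
    then have p_le: "fst p \<le> prebar E Phi pre e"
      using \<open>e \<in> E\<close> by (simp add: prebar_def Sup_upper)
    have eq_at_e: "inf (g e) (prebar E Phi pre e) = inf (g' e) (prebar E Phi pre e)"
      using fun_cong[OF assms, of e] by simp
    have below_p: "inf (g e) b = inf (g' e) b" if "b \<le> fst p" for b
    proof -
      have b_le: "b \<le> prebar E Phi pre e" using that p_le by (rule order_trans)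
      have "inf (g e) b = inf (inf (g e) (prebar E Phi pre e)) b"
        using b_le by (simp add: inf.absorb2 inf.assoc)
      also have "\<dots> = inf (g' e) b" using b_le eq_at_e by (simp add: inf.absorb2 inf.assoc)
      finally show ?thesis .
    qed
    then have "\<And>q. q \<in> mb Phi p \<Longrightarrow> inf (g e) (fst q) = inf (g' e) (fst q)"
      using mb_copy_less copy_less_fst_le by blast
    then have "(\<Sum>q\<in>mb Phi p. m (inf (g e) (fst q))) = (\<Sum>q\<in>mb Phi p. m (inf (g' e) (fst q)))"
      by (intro sum.cong) auto
    then show ?thesis unfolding mu_a_def using below_p[of "fst p"] by simp
  qed simp
qed

locale agent_update = monadic_power imp D B E s for imp :: "'a::{finite,complete_lattice} \<Rightarrow> 'a \<Rightarrow> 'a"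
    and D B and E :: "'e set" and s +
  fixes m :: "'a \<Rightarrow> real" and Pi :: "'e \<Rightarrow> real"
    and Phi :: "'a multiset" and pre :: "'e \<Rightarrow> 'a \<times> nat \<Rightarrow> real"
  assumes measure: "i_measure D m"
    and finite_E: "finite E" and Pi_pos: "\<forall>e\<in>E. 0 < Pi e"
    and Phi_chain: "\<forall>a\<in>#Phi. \<forall>b\<in>#Phi. a \<noteq> b \<longrightarrow> inf a b = bot \<or> a < b \<or> b < a"
    and pre_nonneg: "\<forall>p\<in>copies Phi. \<forall>e\<in>E. 0 \<le> pre e p"
    and pre_zero_upward:
      "\<forall>p\<in>copies Phi. \<forall>q\<in>copies Phi. \<forall>e\<in>E. copy_less p q \<and> pre e p = 0 \<longrightarrow> pre e q = 0"
begin

lemma muP_pos: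
  assumes c0: "c0 \<in> MinA D" and below: "\<forall>e. f e \<le> c0"
    and meets: "inf f (prebar E Phi pre) \<noteq> bot"
  shows "0 < muP E Pi Phi pre m f"
proof -
  interpret A: measure_atom imp D m c0 using heyting measure c0 by unfold_locales
  obtain e where "inf (f e) (prebar E Phi pre e) \<noteq> bot"
    using meets by (metis inf_fun_def bot_fun_def HOL.ext)
  note e = exists_copy_meeting_prebar[OF heyting this]
  define Q where "Q = {p \<in> copies Phi. pre e p \<noteq> 0 \<and> inf (f e) (fst p) \<noteq> bot}"
  obtain p where "p \<in> Q" using e(2) by (auto simp: Q_def)
  then obtain p0 where p0: "p0 \<in> Q" and p0_min: "\<forall>q. copy_less q p0 \<longrightarrow> q \<notin> Q"
    using exists_copy_less_minimal[of p Q Phi] by (auto simp: Q_def)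
  have "inf (f e) (fst q) = bot" if q: "q \<in> mb Phi p0" for q
  proof -
    have q_less: "q \<in> copies Phi" "copy_less q p0" using mb_subset_copies mb_copy_less q by blast+
    have "p0 \<in> copies Phi" "pre e p0 \<noteq> 0" using p0 by (simp_all add: Q_def)
    then have "pre e q \<noteq> 0" using pre_zero_upward q_less e(1) by blast
    then show ?thesis using p0_min q_less unfolding Q_def by blast
  qed
  then have "0 < mu_a m Phi p0 (f e)" using A.mu_a_pos below p0 by (simp add: Q_def)
  moreover have "0 < pre e p0" using pre_nonneg p0 e(1) by (force simp: Q_def)
  moreover have nonneg: "0 \<le> Pi e' * mu_a m Phi p (f e') * pre e' p"
    if "e' \<in> E" "p \<in> copies Phi" for e' p
    using Pi_pos pre_nonneg that A.mu_a_nonneg[OF Phi_chain below[rule_format]] by (simp add: less_imp_le)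
  ultimately have "0 < (\<Sum>p\<in>copies Phi. Pi e * mu_a m Phi p (f e) * pre e p)"
    using Pi_pos e(1) p0 by (intro sum_pos2[OF finite_copies, of p0]) (auto simp: Q_def)
  then show ?thesis
    unfolding muP_def using nonneg
    by (intro sum_pos2[OF finite_E e(1)]) (auto intro: sum_nonneg)
qed

lemma muP_MinQ_pos:
  assumes F: "F \<in> MinQ E s D (prebar E Phi pre)" and f: "f \<in> F" "f \<in> MinP_down E s D"
  shows "0 < muP E Pi Phi pre m f"
proof -
  obtain f0 where f0: "f0 \<in> MinP E s D" "f \<le> f0" using f(2) by (auto simp: MinP_down_def)
  obtain c0 where c0: "c0 \<in> MinA D" "\<forall>e. f0 e \<le> c0" using MinP_le_MinA[OF f0(1)] by blast
  have "\<forall>e. f e \<le> c0" using f0(2) c0(2) by (metis le_funD order_trans)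
  moreover have "inf f (prebar E Phi pre) \<noteq> bot"
  proof -
    obtain f1 where f1: "f1 \<in> AE E" "F = qclass E (prebar E Phi pre) f1"
      using MinQ_Qcarrier[OF F] by (rule QcarrierE)
    then have "inf f1 (prebar E Phi pre) \<noteq> bot"
      using MinQ_neq_bot[OF F] qclass_eq_iff[OF f1(1)] by simp
    then show ?thesis using f(1) f1(2) by (simp add: mem_qclass)
  qed
  ultimately show ?thesis using muP_pos c0(1) by blast
qed

lemma updated_measure_well_defined:
  "let c = prebar E Phi pre in
    \<forall>X\<in>MinQ_down E s D c. X \<noteq> qclass E c bot \<longrightarrow>
      (\<exists>!F. F \<in> MinQ E s D c \<and> qle c X F) \<and>
      (\<forall>F. F \<in> MinQ E s D c \<and> qle c X F \<longrightarrow>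
         (\<exists>g\<in>X. \<exists>f\<in>F. g \<in> MinP_down E s D \<and> f \<in> MinP_down E s D) \<and>
         (\<forall>f\<in>F. f \<in> MinP_down E s D \<longrightarrow> muP E Pi Phi pre m f \<noteq> 0) \<and>
         (\<forall>g\<in>X. \<forall>f\<in>F. \<forall>g'\<in>X. \<forall>f'\<in>F.
            g \<in> MinP_down E s D \<and> f \<in> MinP_down E s D \<and>
            g' \<in> MinP_down E s D \<and> f' \<in> MinP_down E s D \<longrightarrow>
            muP E Pi Phi pre m g / muP E Pi Phi pre m f =
            muP E Pi Phi pre m g' / muP E Pi Phi pre m f'))"
  unfolding Let_def
proof (intro ballI impI conjI allI)
  fix X assume X: "X \<in> MinQ_down E s D (prebar E Phi pre)" "X \<noteq> qclass E (prebar E Phi pre) bot"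
  then obtain x where x: "x \<in> AE E" "X = qclass E (prebar E Phi pre) x"
    by (auto simp: MinQ_down_def elim: QcarrierE)
  show "\<exists>!F. F \<in> MinQ E s D (prebar E Phi pre) \<and> qle (prebar E Phi pre) X F"
    using X x MinQ_above_unique[OF x(1)] by (auto simp: MinQ_down_def)
  fix F assume F: "F \<in> MinQ E s D (prebar E Phi pre) \<and> qle (prebar E Phi pre) X F"
  show "\<exists>g\<in>X. \<exists>f\<in>F. g \<in> MinP_down E s D \<and> f \<in> MinP_down E s D"
    using MinQ_reps_MinP_down X(1) F by (auto simp: MinQ_down_def)
  show "muP E Pi Phi pre m f \<noteq> 0" if "f \<in> F" "f \<in> MinP_down E s D" for f
    using muP_MinQ_pos[OF conjunct1[OF F] that] by simp
  show "muP E Pi Phi pre m g / muP E Pi Phi pre m f = muP E Pi Phi pre m g' / muP E Pi Phi pre m f'"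
    if "g \<in> X" "f \<in> F" "g' \<in> X" "f' \<in> F"
      and "g \<in> MinP_down E s D \<and> f \<in> MinP_down E s D \<and>
        g' \<in> MinP_down E s D \<and> f' \<in> MinP_down E s D" for g f g' f'
  proof -
    obtain y where "F = qclass E (prebar E Phi pre) y"
      using MinQ_Qcarrier F by (blast elim: QcarrierE)
    then have "inf g (prebar E Phi pre) = inf g' (prebar E Phi pre)"
      and "inf f (prebar E Phi pre) = inf f' (prebar E Phi pre)"
      using that x by (simp_all add: mem_qclass)
    then show ?thesis using muP_cong by metis
  qed
qed

end

lemma agent_update_of_structures:
  assumes "APE_structure Ag imp dia box mu" "prob_event_structure Ag E sim P Phi pre" "i \<in> Ag"
  shows "agent_update imp (dia i) (box i) E (sim i) (mu i) (P i) Phi pre"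
proof -
  have mh: "monadic_heyting Ag imp dia box" and meas: "i_measure (dia i) (mu i)"
    using assms(1,3) unfolding APE_structure_def epistemic_heyting_def by blast+
  then have hi: "heyting_imp imp" by (simp add: monadic_heyting_def)
  have ops: "mono (dia i) \<and> mono (box i) \<and>
      (\<forall>a b. a \<le> dia i a \<and> box i a \<le> a \<and>
        dia i (sup a b) \<le> sup (dia i a) (dia i b) \<and>
        box i (imp a b) \<le> imp (box i a) (box i b) \<and>
        dia i a \<le> box i (dia i a) \<and> dia i (box i a) \<le> box i a \<and>
        box i (imp a b) \<le> imp (dia i a) (dia i b)) \<and>
      dia i bot \<le> bot \<and> top \<le> box i top"
    using mh assms(3) unfolding monadic_heyting_def by blast
  have pes: "finite E" "equiv E (sim i)" "\<forall>e\<in>E. 0 < P i e"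
    "\<forall>a\<in>#Phi. \<forall>b\<in>#Phi. a \<noteq> b \<longrightarrow> inf a b = bot \<or> a < b \<or> b < a"
    "\<forall>p\<in>copies Phi. \<forall>e\<in>E. 0 \<le> pre e p"
    "\<forall>p\<in>copies Phi. \<forall>q\<in>copies Phi. \<forall>e\<in>E. copy_less p q \<and> pre e p = 0 \<longrightarrow> pre e q = 0"
    using assms(2,3) unfolding prob_event_structure_def by blast+
  show ?thesis
    by unfold_locales (use hi ops meas pes in blast)+
qed

theorem lemma6:
  fixes Ag :: "'i set"
    and imp :: "'a::{finite,complete_lattice} \<Rightarrow> 'a \<Rightarrow> 'a"
    and dia box :: "'i \<Rightarrow> 'a \<Rightarrow> 'a"
    and mu :: "'i \<Rightarrow> 'a \<Rightarrow> real"
    and E :: "'e set"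
    and sim :: "'i \<Rightarrow> ('e \<times> 'e) set"
    and P :: "'i \<Rightarrow> 'e \<Rightarrow> real"
    and Phi :: "'a multiset"
    and pre :: "'e \<Rightarrow> 'a \<times> nat \<Rightarrow> real"
  assumes "APE_structure Ag imp dia box mu"
    and "prob_event_structure Ag E sim P Phi pre"
  shows "let c = prebar E Phi pre in
    \<forall>i\<in>Ag. \<forall>X\<in>MinQ_down E (sim i) (dia i) c. X \<noteq> qclass E c bot \<longrightarrow>
      (\<exists>!F. F \<in> MinQ E (sim i) (dia i) c \<and> qle c X F) \<and>
      (\<forall>F. F \<in> MinQ E (sim i) (dia i) c \<and> qle c X F \<longrightarrow>
         (\<exists>g\<in>X. \<exists>f\<in>F. g \<in> MinP_down E (sim i) (dia i) \<and> f \<in> MinP_down E (sim i) (dia i)) \<and>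
         (\<forall>f\<in>F. f \<in> MinP_down E (sim i) (dia i) \<longrightarrow> muP E (P i) Phi pre (mu i) f \<noteq> 0) \<and>
         (\<forall>g\<in>X. \<forall>f\<in>F. \<forall>g'\<in>X. \<forall>f'\<in>F.
            g \<in> MinP_down E (sim i) (dia i) \<and> f \<in> MinP_down E (sim i) (dia i) \<and>
            g' \<in> MinP_down E (sim i) (dia i) \<and> f' \<in> MinP_down E (sim i) (dia i) \<longrightarrow>
            muP E (P i) Phi pre (mu i) g / muP E (P i) Phi pre (mu i) f =
            muP E (P i) Phi pre (mu i) g' / muP E (P i) Phi pre (mu i) f'))"
  using agent_update.updated_measure_well_defined[OF agent_update_of_structures[OF assms]]
  unfolding Let_def by (rule ballI)

end
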